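(* For every integer $k\ge1$ let $a_k=(a_k(n))_{n\ge0}$ and $b_k=(b_k(n))_{n\ge0}$ be given by $a_k(n)=A_{n+k-1,k}$ and $b_k(n)=B_{n+k,k}$. Then: (i) $a_k,b_k\in\ell^1(\mathbb{N}^0,\frac{1}{4^n})$ with $\|a_k\|_{1,\frac1{4^n}}=2^{2k-1}$ and $\|b_k\|_{1,\frac1{4^n}}=2^{2k}$; (ii) $Z(a_k)(z)=(C(z))^{2k-1}$ and $Z(b_k)(z)=(C(z))^{2k}$ for $|z|<\frac14$; (iii) $a_k$ equals the convolution product of $2k-1$ copies of $c$, and $b_k$ equals the convolution product of $2k$ copies of $c$ (in the paper's notation, $a_k=c^{\ast(2k-2)}$ and $b_k=c^{\ast(2k-1)}$).
   Context: $C_n=\frac{1}{n+1}\binom{2n}{n}$ are the Catalan numbers, $c=(C_n)_{n\ge0}$, and $C(z)=\sum_{n\ge0}C_nz^n=\frac{1-\sqrt{1-4z}}{2z}$ for $|z|<\frac14$. The Catalan triangle numbers are $B_{n,k}=\frac{k}{n}\binom{2n}{n-k}$ ($n\ge1$, $1\le k\le n$) and $A_{n,k}=\frac{2k-1}{2n+1}\binom{2n+1}{n+1-k}$ ($n\ge0$, $1\le k\le n+1$). $\ell^1(\mathbb{N}^0,\frac1{4^n})$ is the Banach algebra of complex sequences $a=(a(n))_{n\ge0}$ with $\|a\|_{1,\frac1{4^n}}=\sum_{n\ge0}|a(n)|/4^n<\infty$, with convolution product $(a\ast b)(n)=\sum_{j=0}^n a(n-j)b(j)$. The paper's convention for convolution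 powers is $a^{\ast0}=a$, $a^{\ast n}=a^{\ast(n-1)}\ast a$, so $a^{\ast m}$ is the product of $m+1$ copies of $a$. $Z(a)(z)=\sum_{n\ge0}a(n)z^n$ is the $Z$-transform. *)

theory Defs
  imports "HOL-Analysis.Analysis"
begin

definition catalan :: "nat \<Rightarrow> complex" where
  "catalan n = of_nat ((2*n) choose n) / of_nat (n+1)"

definition catB :: "nat \<Rightarrow> nat \<Rightarrow> complex" where
  "catB n k = of_nat k / of_nat n * of_nat ((2*n) choose (n-k))"

definition catA :: "nat \<Rightarrow> nat \<Rightarrow> complex" where
  "catA n k = (2 * of_nat k - 1) / (2 * of_nat n + 1) * of_nat ((2*n+1) choose (n+1-k))"

text \<open>Generating function C(z) = (1 - sqrt(1-4z))/(2z), extended by its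
  limit value 1 at z = 0 (principal square root).\<close>
definition catalan_gf :: "complex \<Rightarrow> complex" where
  "catalan_gf z = (if z = 0 then 1 else (1 - csqrt (1 - 4*z)) / (2*z))"

definition in_l1w :: "(nat \<Rightarrow> complex) \<Rightarrow> bool" where
  "in_l1w a \<longleftrightarrow> summable (\<lambda>n. norm (a n) / 4^n)"

definition l1w_norm :: "(nat \<Rightarrow> complex) \<Rightarrow> real" where
  "l1w_norm a = (\<Sum>n. norm (a n) / 4^n)"

text \<open>Convolution product and the paper's convolution powers
  (a^{*0} = a, a^{*n} = a^{*(n-1)} * a).\<close>
definition conv :: "(nat \<Rightarrow> complex) \<Rightarrow> (nat \<Rightarrow> complex) \<Rightarrow> nat \<Rightarrow> complex" where
  "conv a b n = (\<Sum>j\<le>n. a (n-j) * b j)"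

fun conv_pow :: "(nat \<Rightarrow> complex) \<Rightarrow> nat \<Rightarrow> nat \<Rightarrow> complex" where
  "conv_pow a 0 = a"
| "conv_pow a (Suc m) = conv (conv_pow a m) a"

text \<open>Z-transform as a formal sum; convergence is asserted separately via sums.\<close>
definition Ztrans :: "(nat \<Rightarrow> complex) \<Rightarrow> complex \<Rightarrow> complex" where
  "Ztrans a z = (\<Sum>n. a n * z^n)"

end

theory Submission
  imports Defs
begin

(* The Catalan series C = sum C_n X^n satisfies C = 1 + X C^2 as a formal power series, because
   1 - 2 X C is the binomial series of (1 - 4X)^(1/2).  Hence C^(m+1) = C^m + X C^(m+2).  The ballot
   numbers m/(2n+m) binom(2n+m, n) satisfy the same recurrence (written as a difference of two
   binomial coefficients it is Pascal's rule), so they are the coefficients of C^m; the numbers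
   A_{n+k-1,k} and B_{n+k,k} are the ballot numbers for m = 2k-1 and m = 2k.

   Analytically, C_n/4^n = 2 (u_n - u_(n+1)) with u_n = binom(2n, n)/4^n tending to 0, so
   sum C_n/4^n = 2 and all series involved converge absolutely on |z| <= 1/4.  Cauchy products
   show that the Z-transform of the (m+1)-fold convolution power of c is Z(c)^(m+1).  At z = 1/4
   all terms are nonnegative, which yields the weighted l^1 norms 2^(m+1); for |z| < 1/4 the value
   Z(c)(z) is the root w of z w^2 - w + 1 = 0 with |2 z w| < 1, which is C(z). *)

lemma central_binomial_Suc:
  "Suc n * (2 * Suc n choose Suc n) = 2 * (2 * n + 1) * (2 * n choose n)"
proof -
  have "2 * Suc n choose Suc n = (Suc (2 * n) choose n) + (Suc (2 * n) choose Suc n)"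
    by simp
  also have "Suc (2 * n) choose n = Suc (2 * n) choose Suc n"
    using binomial_symmetric[of n "Suc (2 * n)"] by simp
  finally have "Suc n * (2 * Suc n choose Suc n) = 2 * (Suc n * (Suc (2 * n) choose Suc n))"
    by simp
  also have "Suc n * (Suc (2 * n) choose Suc n) = Suc (2 * n) * (2 * n choose n)"
    by (rule Suc_times_binomial)
  finally show ?thesis by simp
qed

lemma catalan_Suc: "of_nat (n + 2) * catalan (Suc n) = 2 * (2 * of_nat n + 1) * catalan n"
proof -
  have "of_nat (Suc n) * of_nat (2 * Suc n choose Suc n)
      = (of_nat (2 * (2 * n + 1)) * of_nat (2 * n choose n) :: complex)"
    using arg_cong[OF central_binomial_Suc[of n], of "of_nat :: nat \<Rightarrow> complex"]
    by (simp only: of_nat_mult mult.assoc)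
  then show ?thesis
    by (simp add: catalan_def field_simps del: binomial_Suc_Suc of_nat_Suc) (simp add: algebra_simps)
qed

(* The coefficient of X^n in C^m.  m = 0 is special-cased: the closed form would give
   0/0 = 0 at n = 0, but C^0 = 1. *)
definition ballot :: "nat \<Rightarrow> nat \<Rightarrow> complex" where
  "ballot m n = (if m = 0 then of_bool (n = 0)
     else of_nat m / of_nat (2 * n + m) * of_nat ((2 * n + m) choose n))"

lemma ballot_0_right [simp]: "ballot m 0 = 1"
  by (simp add: ballot_def)

lemma ballot_Suc_right:
  "ballot m (Suc n) = of_nat (Suc (2 * n + m) choose Suc n) - of_nat (Suc (2 * n + m) choose n)"
proof (cases "m = 0")
  case True
  then show ?thesis
    using binomial_symmetric[of n "Suc (2 * n)"] by (simp add: ballot_def)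
next
  case False
  define a where "a = Suc (2 * n + m)"
  have "Suc n * (Suc a choose Suc n) = Suc a * (a choose n)"
    by (rule Suc_times_binomial)
  then have absorb_Suc:
    "of_nat (Suc n) * of_nat (Suc a choose Suc n) = (of_nat (Suc a) * of_nat (a choose n) :: complex)"
    by (metis of_nat_mult)
  have "Suc n * (a choose Suc n) = (a - n) * (a choose n)"
    by (simp only: binomial_absorption binomial_absorb_comp)
  also have "a - n = Suc (n + m)"
    by (simp add: a_def)
  finally have absorb:
    "of_nat (Suc n) * of_nat (a choose Suc n) = (of_nat (Suc (n + m)) * of_nat (a choose n) :: complex)"
    by (metis of_nat_mult)
  have "ballot m (Suc n) = of_nat m / of_nat (Suc a) * of_nat (Suc a choose Suc n)"
    using False by (simp add: ballot_def a_def del: binomial_Suc_Suc)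
  also have "\<dots> = of_nat m / of_nat (Suc n) * of_nat (a choose n)"
    using absorb_Suc by (simp add: field_simps del: binomial_Suc_Suc of_nat_Suc)
  also have "\<dots> = of_nat (a choose Suc n) - of_nat (a choose n)"
    using absorb by (simp add: field_simps del: binomial_Suc_Suc of_nat_Suc) (simp add: algebra_simps)
  finally show ?thesis
    by (simp add: a_def)
qed

lemma ballot_Suc_Suc: "ballot (Suc m) (Suc n) = ballot m (Suc n) + ballot (Suc (Suc m)) n"
  by (cases n) (simp_all add: ballot_Suc_right)

lemma ballot_1: "ballot 1 = catalan"
proof
  fix n
  have "Suc (2 * n) choose n = Suc (2 * n) choose Suc n"
    using binomial_symmetric[of n "Suc (2 * n)"] by simp
  also have "Suc n * \<dots> = Suc (2 * n) * (2 * n choose n)"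
    by (rule Suc_times_binomial)
  finally have "of_nat (Suc n) * of_nat (Suc (2 * n) choose n)
      = (of_nat (Suc (2 * n)) * of_nat (2 * n choose n) :: complex)"
    by (metis of_nat_mult)
  then show "ballot 1 n = catalan n"
    by (simp add: ballot_def catalan_def field_simps del: binomial_Suc_Suc of_nat_Suc)
qed

lemma ballot_nonneg: "ballot m n \<in> \<real>\<^sub>\<ge>\<^sub>0"
  by (simp add: ballot_def)

lemma catA_eq_ballot:
  assumes "k \<ge> 1"
  shows "catA (n + k - 1) k = ballot (2 * k - 1) n"
proof -
  obtain j where "k = Suc j"
    using assms by (cases k) auto
  then show ?thesis
    by (simp add: catA_def ballot_def algebra_simps)
qed

lemma catB_eq_ballot:
  assumes "k \<ge> 1"
  shows "catB (n + k) k = ballot (2 * k) n"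
proof -
  have "(of_nat (2 * k) / of_nat (2 * (n + k)) :: complex) = of_nat k / of_nat (n + k)"
    unfolding of_nat_mult by (rule mult_divide_mult_cancel_left) simp
  with assms show ?thesis
    by (simp add: catB_def ballot_def algebra_simps)
qed

lemma gchoose_half_Suc: "((1/2 :: complex) gchoose Suc n) * (-4) ^ Suc n = - 2 * catalan n"
proof (induction n)
  case 0
  show ?case
    by (simp add: catalan_def)
next
  case (Suc n)
  define g where "g k = ((1/2 :: complex) gchoose k) * (-4) ^ k" for k
  have absorption: "of_nat (Suc (Suc n)) * ((1/2 :: complex) gchoose Suc (Suc n))
      = (1/2 - of_nat (Suc n)) * (1/2 gchoose Suc n)"
    by (simp only: gbinomial_absorption gbinomial_absorb_comp)
  have "of_nat (n + 2) * g (Suc (Suc n))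
      = (of_nat (Suc (Suc n)) * (1/2 gchoose Suc (Suc n))) * (-4) ^ Suc (Suc n)"
    unfolding g_def by (simp only: mult.assoc add_2_eq_Suc')
  also have "\<dots> = ((1/2 - of_nat (Suc n)) * (-4)) * g (Suc n)"
    unfolding absorption g_def by (simp only: power_Suc[of _ "Suc n"] mult_ac)
  also have "\<dots> = - 2 * (2 * (2 * of_nat n + 1) * catalan n)"
    unfolding g_def Suc.IH by (simp add: algebra_simps)
  also have "\<dots> = of_nat (n + 2) * (- 2 * catalan (Suc n))"
    unfolding catalan_Suc[symmetric] by (simp only: mult_ac)
  finally show ?case
    unfolding g_def by (simp only: mult_left_cancel of_nat_neq_0 add_2_eq_Suc' not_False_eq_True)
qed

definition fps_catalan :: "complex fps" where
  "fps_catalan = Abs_fps catalan"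

lemma fps_catalan_quadratic: "fps_catalan = 1 + fps_X * fps_catalan ^ 2"
proof -
  define S where "S = Abs_fps (\<lambda>n. ((1/2 :: complex) gchoose n) * (-4) ^ n)"
  have "S ^ 2 = 1 - 4 * fps_X"
  proof (rule fps_ext)
    fix n
    have "fps_nth (S ^ 2) n
        = (\<Sum>i=0..n. ((1/2 :: complex) gchoose i) * ((1/2) gchoose (n - i))) * (-4) ^ n"
      unfolding S_def power2_eq_square fps_mult_nth sum_distrib_right
      by (intro sum.cong refl) (simp add: algebra_simps flip: power_add)
    also have "\<dots> = of_nat (1 choose n) * (-4) ^ n"
      by (simp add: gbinomial_Vandermonde binomial_gbinomial)
    also have "\<dots> = fps_nth (1 - 4 * fps_X) n"
      by (cases n; cases "n - 1") (auto simp: fps_X_def)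
    finally show "fps_nth (S ^ 2) n = fps_nth (1 - 4 * fps_X) n" .
  qed
  moreover have "S = 1 - 2 * fps_X * fps_catalan"
  proof (rule fps_ext)
    fix n
    show "fps_nth S n = fps_nth (1 - 2 * fps_X * fps_catalan) n"
      by (cases n) (simp_all add: S_def fps_catalan_def gchoose_half_Suc mult.assoc del: power_Suc)
  qed
  ultimately have "4 * (fps_X * (1 + fps_X * fps_catalan ^ 2 - fps_catalan)) = 0"
    by (simp add: algebra_simps power2_eq_square)
  then have "1 + fps_X * fps_catalan ^ 2 - fps_catalan = 0"
    by (simp only: mult_eq_0_iff numeral_neq_fps_zero fps_X_neq_zero simp_thms)
  then show ?thesis
    by (simp only: right_minus_eq)
qed

lemma Abs_fps_conv: "Abs_fps (conv a b) = Abs_fps a * Abs_fps b"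
proof -
  have "Abs_fps (conv a b) = Abs_fps b * Abs_fps a"
  proof (rule fps_ext)
    fix n
    have "conv a b n = (\<Sum>i=0..n. b i * a (n - i))"
      by (simp add: conv_def atLeast0AtMost mult.commute)
    then show "fps_nth (Abs_fps (conv a b)) n = fps_nth (Abs_fps b * Abs_fps a) n"
      by (simp add: fps_mult_nth)
  qed
  then show ?thesis
    by (simp add: mult.commute)
qed

lemma Abs_fps_conv_pow: "Abs_fps (conv_pow a m) = Abs_fps a ^ Suc m"
  by (induction m) (simp_all add: Abs_fps_conv)

lemma catalan_Suc_conv: "catalan (Suc n) = conv catalan catalan n"
proof -
  have "catalan (Suc n) = fps_nth (1 + fps_X * fps_catalan ^ 2) (Suc n)"
    by (simp only: fps_catalan_quadratic[symmetric]) (simp add: fps_catalan_def)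
  also have "\<dots> = fps_nth (fps_catalan ^ 2) n"
    by simp
  also have "\<dots> = conv catalan catalan n"
    by (simp add: fps_catalan_def power2_eq_square flip: Abs_fps_conv)
  finally show ?thesis .
qed

lemma fps_catalan_power: "fps_catalan ^ m = Abs_fps (ballot m)"
proof (induction m rule: induct_nat_012)
  case 0
  show ?case
    by (rule fps_ext) (simp add: ballot_def)
next
  case 1
  show ?case
    by (simp add: fps_catalan_def ballot_1[unfolded One_nat_def])
next
  case (ge2 m)
  have ballot_rec:
    "Abs_fps (ballot (Suc m)) = Abs_fps (ballot m) + fps_X * Abs_fps (ballot (Suc (Suc m)))"
  proof (rule fps_ext)
    fix n
    show "fps_nth (Abs_fps (ballot (Suc m))) n
        = fps_nth (Abs_fps (ballot m) + fps_X * Abs_fps (ballot (Suc (Suc m)))) n"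
      by (cases n) (simp_all add: ballot_Suc_Suc)
  qed
  have "fps_catalan ^ Suc m = fps_catalan ^ m * (1 + fps_X * fps_catalan ^ 2)"
    by (simp only: power_Suc2 fps_catalan_quadratic[symmetric])
  also have "\<dots> = fps_catalan ^ m + fps_X * fps_catalan ^ Suc (Suc m)"
    by (simp add: algebra_simps power2_eq_square)
  finally have power_rec:
    "fps_catalan ^ Suc m = fps_catalan ^ m + fps_X * fps_catalan ^ Suc (Suc m)" .
  have "fps_X * fps_catalan ^ Suc (Suc m) = fps_X * Abs_fps (ballot (Suc (Suc m)))"
    using ballot_rec power_rec ge2.IH by simp
  then show ?case
    by simp
qed

lemma conv_pow_catalan: "conv_pow catalan m = ballot (Suc m)"
proof -
  have "Abs_fps (conv_pow catalan m) = Abs_fps (ballot (Suc m))"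
    by (simp only: Abs_fps_conv_pow fps_catalan_power flip: fps_catalan_def)
  then show ?thesis
    by (simp add: fps_eq_iff fun_eq_iff)
qed

lemma central_binomial_quarter_Suc:
  "real (2 * Suc n choose Suc n) / 4 ^ Suc n * (2 * real n + 2)
    = real (2 * n choose n) / 4 ^ n * (2 * real n + 1)"
proof -
  have central: "real (2 * Suc n choose Suc n) * (2 * real n + 2)
      = 4 * (real (2 * n choose n) * (2 * real n + 1))"
    using arg_cong[OF central_binomial_Suc[of n], of "\<lambda>x. 2 * real x"]
    by (simp add: algebra_simps del: binomial_Suc_Suc)
  have "real (2 * Suc n choose Suc n) / 4 ^ Suc n * (2 * real n + 2)
      = real (2 * Suc n choose Suc n) * (2 * real n + 2) / (4 * 4 ^ n)"
    by (simp del: binomial_Suc_Suc)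
  also have "\<dots> = real (2 * n choose n) / 4 ^ n * (2 * real n + 1)"
    unfolding central by simp
  finally show ?thesis .
qed

lemma central_binomial_quarter_sq_le: "(real (2 * n choose n) / 4 ^ n) ^ 2 * (2 * real n + 1) \<le> 1"
proof (induction n)
  case 0
  show ?case
    by simp
next
  case (Suc n)
  define u where "u k = real (2 * k choose k) / 4 ^ k" for k
  have "(u (Suc n) ^ 2 * (2 * real n + 3)) * (2 * real n + 2) ^ 2
      = (u n ^ 2 * (2 * real n + 1)) * ((2 * real n + 1) * (2 * real n + 3))"
    using arg_cong[OF central_binomial_quarter_Suc[of n, folded u_def], of "\<lambda>x. x ^ 2"]
    by (simp add: power_mult_distrib power2_eq_square mult_ac)
  also have "\<dots> \<le> 1 * (2 * real n + 2) ^ 2"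
    using Suc.IH by (intro mult_mono) (simp_all add: u_def power2_eq_square algebra_simps)
  finally have "u (Suc n) ^ 2 * (2 * real n + 3) \<le> 1"
    by (rule mult_right_le_imp_le) simp
  then show ?case
    by (simp add: u_def algebra_simps del: binomial_Suc_Suc)
qed

lemma tendsto_central_binomial_quarter: "(\<lambda>n. real (2 * n choose n) / 4 ^ n) \<longlonglongrightarrow> 0"
proof -
  have "(\<lambda>n. (real (2 * n choose n) / 4 ^ n) ^ 2) \<longlonglongrightarrow> 0"
  proof (rule tendsto_sandwich[of "\<lambda>n. 0" _ _ "\<lambda>n. inverse (real (Suc n))"])
    have "(real (2 * n choose n) / 4 ^ n) ^ 2 * (real n + 1) \<le> 1" for n
      using central_binomial_quarter_sq_le[of n]
      by (rule order_trans[rotated]) (intro mult_left_mono; simp)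
    then show "\<forall>\<^sub>F n in sequentially.
        (real (2 * n choose n) / 4 ^ n) ^ 2 \<le> inverse (real (Suc n))"
      by (simp add: field_simps)
  qed (use LIMSEQ_inverse_real_of_nat in auto)
  then have "(\<lambda>n. sqrt ((real (2 * n choose n) / 4 ^ n) ^ 2)) \<longlonglongrightarrow> sqrt 0"
    by (intro tendsto_intros)
  then show ?thesis
    by simp
qed

lemma sums_catalan_quarter: "(\<lambda>n. catalan n * (1/4) ^ n) sums 2"
proof -
  define u where "u n = real (2 * n choose n) / 4 ^ n" for n
  have "u \<longlonglongrightarrow> 0"
    unfolding u_def by (rule tendsto_central_binomial_quarter)
  moreover have "u 0 = 1"
    by (simp add: u_def)
  ultimately have "(\<lambda>n. 2 * (u n - u (Suc n))) sums 2"
    using sums_mult[OF telescope_sums', of u 0 2] by simp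
  moreover have "2 * (u n - u (Suc n)) = real (2 * n choose n) / real (n + 1) * (1/4) ^ n" for n
  proof -
    have "2 * (u n - u (Suc n)) * (real n + 1)
        = 2 * u n * (real n + 1) - u (Suc n) * (2 * real n + 2)"
      by (simp add: algebra_simps)
    also have "\<dots> = u n"
      unfolding central_binomial_quarter_Suc[of n, folded u_def] by (simp add: algebra_simps)
    finally have "2 * (u n - u (Suc n)) = u n / (real n + 1)"
      by (simp add: field_simps)
    also have "\<dots> = real (2 * n choose n) / real (n + 1) * (1/4) ^ n"
      by (simp add: u_def field_simps)
    finally show ?thesis .
  qed
  ultimately have "(\<lambda>n. complex_of_real (real (2 * n choose n) / real (n + 1) * (1/4) ^ n))
      sums complex_of_real 2"
    by (simp only: sums_of_real_iff)
  then show ?thesis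
    by (simp add: catalan_def)
qed

lemma sums_norm_nonneg_Reals:
  assumes "\<And>n. f n \<in> \<real>\<^sub>\<ge>\<^sub>0" and "f sums s"
  shows "(\<lambda>n. norm (f n)) sums Re s"
  using sums_Re[OF assms(2)] assms(1) by (simp add: nonneg_Reals_cmod_eq_Re)

lemma catalan_nonneg: "catalan n \<in> \<real>\<^sub>\<ge>\<^sub>0"
  by (simp add: catalan_def)

lemma sums_norm_catalan_quarter: "(\<lambda>n. norm (catalan n * (1/4) ^ n)) sums 2"
  using sums_norm_nonneg_Reals[OF _ sums_catalan_quarter] catalan_nonneg by simp

lemma norm_catalan_power_le:
  assumes "norm z \<le> 1/4"
  shows "norm (catalan n * z ^ n) \<le> norm (catalan n * (1/4) ^ n)"
  using assms by (simp add: norm_mult norm_power mult_left_mono power_mono)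

lemma summable_norm_catalan_power:
  assumes "norm z \<le> 1/4"
  shows "summable (\<lambda>n. norm (catalan n * z ^ n))"
  using sums_summable[OF sums_norm_catalan_quarter]
  by (rule summable_comparison_test'[where N = 0]) (simp add: norm_catalan_power_le[OF assms])

lemma norm_Ztrans_catalan_le:
  assumes "norm z \<le> 1/4"
  shows "norm (Ztrans catalan z) \<le> 2"
proof -
  have "norm (Ztrans catalan z) \<le> (\<Sum>n. norm (catalan n * z ^ n))"
    unfolding Ztrans_def using summable_norm_catalan_power[OF assms] by (rule summable_norm)
  also have "\<dots> \<le> (\<Sum>n. norm (catalan n * (1/4) ^ n))"
    using summable_norm_catalan_power[OF assms] sums_summable[OF sums_norm_catalan_quarter]
    by (rule suminf_le[rotated]) (rule norm_catalan_power_le[OF assms])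
  also have "\<dots> = 2"
    using sums_norm_catalan_quarter by (simp add: sums_iff)
  finally show ?thesis .
qed

lemma Ztrans_catalan_quarter: "Ztrans catalan (1/4) = 2"
  using sums_catalan_quarter by (simp add: Ztrans_def sums_iff)

lemma Ztrans_conv:
  assumes "summable (\<lambda>n. norm (a n * z ^ n))" and "summable (\<lambda>n. norm (b n * z ^ n))"
  shows "summable (\<lambda>n. norm (conv a b n * z ^ n))"
    and "(\<lambda>n. conv a b n * z ^ n) sums (Ztrans a z * Ztrans b z)"
proof -
  define x where "x i = b i * z ^ i" for i
  define y where "y i = a i * z ^ i" for i
  have conv_eq: "conv a b n * z ^ n = (\<Sum>i\<le>n. x i * y (n - i))" for n
  proof -
    have "conv a b n * z ^ n = (\<Sum>i\<le>n. a (n - i) * b i * z ^ n)"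
      by (simp add: conv_def sum_distrib_right)
    also have "\<dots> = (\<Sum>i\<le>n. x i * y (n - i))"
      by (intro sum.cong refl) (simp add: x_def y_def mult_ac flip: power_add)
    finally show ?thesis .
  qed
  have x: "summable (\<lambda>n. norm (x n))" and y: "summable (\<lambda>n. norm (y n))"
    using assms by (simp_all add: x_def y_def)
  have "(\<Sum>n. x n) = Ztrans b z" and "(\<Sum>n. y n) = Ztrans a z"
    by (simp_all add: Ztrans_def x_def y_def)
  with Cauchy_product_sums[OF x y]
  have "(\<lambda>n. conv a b n * z ^ n) sums (Ztrans b z * Ztrans a z)"
    by (simp only: conv_eq)
  then show "(\<lambda>n. conv a b n * z ^ n) sums (Ztrans a z * Ztrans b z)"
    by (simp only: mult.commute)
  have "summable (\<lambda>n. \<Sum>i\<le>n. norm (x i) * norm (y (n - i)))"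
    using x y by (intro summable_Cauchy_product) simp_all
  moreover have
    "norm (norm (conv a b n * z ^ n)) \<le> (\<Sum>i\<le>n. norm (x i) * norm (y (n - i)))" for n
    using norm_sum[of "\<lambda>i. x i * y (n - i)" "{..n}"] by (simp add: conv_eq norm_mult)
  ultimately show "summable (\<lambda>n. norm (conv a b n * z ^ n))"
    by (rule summable_comparison_test'[where N = 0])
qed

lemma Ztrans_conv_pow:
  assumes "summable (\<lambda>n. norm (a n * z ^ n))"
  shows "summable (\<lambda>n. norm (conv_pow a m n * z ^ n))
    \<and> (\<lambda>n. conv_pow a m n * z ^ n) sums (Ztrans a z ^ Suc m)"
proof (induction m)
  case 0
  then show ?case
    using assms by (simp add: Ztrans_def summable_sums summable_norm_cancel)
next
  case (Suc m)
  then have "Ztrans (conv_pow a m) z = Ztrans a z ^ Suc m"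
    by (simp add: Ztrans_def sums_iff)
  then show ?case
    using Ztrans_conv[OF conjunct1[OF Suc.IH] assms] by (simp add: mult_ac)
qed

lemma Ztrans_catalan_quadratic:
  assumes "norm z \<le> 1/4"
  shows "Ztrans catalan z = 1 + z * Ztrans catalan z ^ 2"
proof -
  have "(\<lambda>n. conv catalan catalan n * z ^ n) sums (Ztrans catalan z ^ 2)"
    using Ztrans_conv(2)[OF summable_norm_catalan_power[OF assms] summable_norm_catalan_power[OF assms]]
    by (simp add: power2_eq_square)
  then have "(\<lambda>n. z * (catalan (Suc n) * z ^ n)) sums (z * Ztrans catalan z ^ 2)"
    unfolding catalan_Suc_conv by (rule sums_mult)
  then have "(\<lambda>n. catalan (Suc n) * z ^ Suc n) sums (z * Ztrans catalan z ^ 2)"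
    by (simp add: mult_ac)
  then have "(\<lambda>n. catalan n * z ^ n) sums (z * Ztrans catalan z ^ 2 + catalan 0 * z ^ 0)"
    by (rule sums_Suc_iff[THEN iffD1])
  then have "Ztrans catalan z = z * Ztrans catalan z ^ 2 + catalan 0 * z ^ 0"
    unfolding Ztrans_def by (rule sums_unique[symmetric])
  also have "\<dots> = 1 + z * Ztrans catalan z ^ 2"
    by (simp add: catalan_def)
  finally show ?thesis .
qed

lemma Ztrans_catalan_eq_catalan_gf:
  assumes "norm z < 1/4"
  shows "Ztrans catalan z = catalan_gf z"
proof (cases "z = 0")
  case True
  have "Ztrans catalan 0 = catalan 0"
    unfolding Ztrans_def by (rule powser_zero)
  with True show ?thesis
    by (simp add: catalan_gf_def catalan_def)
next
  case False
  define w where "w = 1 - 2 * z * Ztrans catalan z"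
  have "w ^ 2 = 1 - 4 * z * (Ztrans catalan z - z * Ztrans catalan z ^ 2)"
    by (simp add: w_def power2_eq_square algebra_simps)
  also have "Ztrans catalan z - z * Ztrans catalan z ^ 2 = 1"
    using Ztrans_catalan_quadratic[of z] assms by (metis add_diff_cancel_right' less_eq_real_def)
  finally have "w ^ 2 = 1 - 4 * z"
    by simp
  have "norm (2 * z * Ztrans catalan z) = 2 * norm z * norm (Ztrans catalan z)"
    by (simp add: norm_mult)
  also have "\<dots> \<le> 2 * norm z * 2"
    using norm_Ztrans_catalan_le[of z] assms by (intro mult_left_mono) auto
  also have "\<dots> < 1"
    using assms by simp
  finally have "Re (2 * z * Ztrans catalan z) < 1"
    using complex_Re_le_cmod[of "2 * z * Ztrans catalan z"] by linarith
  then have "Re w > 0"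
    by (simp add: w_def)
  with \<open>w ^ 2 = 1 - 4 * z\<close> have "csqrt (1 - 4 * z) = w"
    by (intro csqrt_unique) auto
  with False show ?thesis
    by (simp add: catalan_gf_def w_def field_simps)
qed

lemma sums_norm_conv_pow_catalan: "(\<lambda>n. norm (conv_pow catalan m n) / 4 ^ n) sums 2 ^ Suc m"
proof -
  have "(\<lambda>n. conv_pow catalan m n * (1/4) ^ n) sums (2 ^ Suc m)"
    using Ztrans_conv_pow[OF summable_norm_catalan_power, of "1/4" m]
    by (simp add: Ztrans_catalan_quarter)
  then have "(\<lambda>n. norm (conv_pow catalan m n * (1/4) ^ n)) sums Re (2 ^ Suc m)"
    by (rule sums_norm_nonneg_Reals[rotated]) (simp add: conv_pow_catalan ballot_nonneg)
  then show ?thesis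
    by (simp add: norm_mult norm_divide norm_power power_one_over)
qed

lemma sums_conv_pow_catalan:
  assumes "norm z < 1/4"
  shows "(\<lambda>n. conv_pow catalan m n * z ^ n) sums (catalan_gf z ^ Suc m)"
  using Ztrans_conv_pow[OF summable_norm_catalan_power, of z m] assms
  by (simp add: Ztrans_catalan_eq_catalan_gf)

theorem proposition3p2:
  fixes k :: nat
  assumes "k \<ge> 1"
  defines "ak \<equiv> (\<lambda>n. catA (n+k-1) k)"
      and "bk \<equiv> (\<lambda>n. catB (n+k) k)"
  shows "in_l1w ak \<and> in_l1w bk
       \<and> l1w_norm ak = 2^(2*k-1) \<and> l1w_norm bk = 2^(2*k)
       \<and> (\<forall>z::complex. norm z < 1/4 \<longrightarrow>
             (\<lambda>n. ak n * z^n) sums (catalan_gf z ^ (2*k-1))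
           \<and> (\<lambda>n. bk n * z^n) sums (catalan_gf z ^ (2*k))
           \<and> Ztrans ak z = catalan_gf z ^ (2*k-1)
           \<and> Ztrans bk z = catalan_gf z ^ (2*k))
       \<and> ak = conv_pow catalan (2*k-2) \<and> bk = conv_pow catalan (2*k-1)"
proof -
  have exponents: "Suc (2 * k - 2) = 2 * k - 1" "Suc (2 * k - 1) = 2 * k"
    using assms by simp_all
  have ak: "ak = conv_pow catalan (2 * k - 2)"
    unfolding ak_def conv_pow_catalan exponents by (rule ext) (rule catA_eq_ballot[OF assms(1)])
  have bk: "bk = conv_pow catalan (2 * k - 1)"
    unfolding bk_def conv_pow_catalan exponents by (rule ext) (rule catB_eq_ballot[OF assms(1)])
  have "(\<lambda>n. norm (ak n) / 4 ^ n) sums 2 ^ (2 * k - 1)"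
    and "(\<lambda>n. norm (bk n) / 4 ^ n) sums 2 ^ (2 * k)"
    using sums_norm_conv_pow_catalan[of "2 * k - 2"] sums_norm_conv_pow_catalan[of "2 * k - 1"]
    by (simp_all only: ak bk exponents)
  moreover have "(\<lambda>n. ak n * z ^ n) sums (catalan_gf z ^ (2 * k - 1))"
    and "(\<lambda>n. bk n * z ^ n) sums (catalan_gf z ^ (2 * k))" if "norm z < 1/4" for z
    using sums_conv_pow_catalan[OF that, of "2 * k - 2"] sums_conv_pow_catalan[OF that, of "2 * k - 1"]
    by (simp_all only: ak bk exponents)
  ultimately show ?thesis
    using ak bk by (simp add: in_l1w_def l1w_norm_def Ztrans_def sums_iff)
qed

end
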